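(* For $t>0$ let $$P(t)=\frac{e^{2 t} (t^3-12 t^2+54 t-86)-e^t (t^3-12 t^2+16 t-160)-26 t-74}{e^t-1},\qquad Q(t)=2e^{2t}-e^t (t^2-6 t+18)+8(t+2).$$ Then $Q(t)>0$ for all $t>0$, the function $P(t)/Q(t)$ is strictly decreasing on $(0,\infty)$, and $$\lim_{t\to0^+}\frac{P(t)}{Q(t)}=1,\qquad \lim_{t\to\infty}\frac{P(t)}{Q(t)}=0.$$ *)

theory Defs
  imports "HOL-Analysis.Analysis"
begin

definition P :: "real \<Rightarrow> real" where
  "P t = (exp (2*t) * (t^3 - 12*t^2 + 54*t - 86) - exp t * (t^3 - 12*t^2 + 16*t - 160)
          - 26*t - 74) / (exp t - 1)"

definition Q :: "real \<Rightarrow> real" where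
  "Q t = 2 * exp (2*t) - exp t * (t^2 - 6*t + 18) + 8*(t + 2)"

end

theory Submission
  imports Defs "HOL-Real_Asymp.Real_Asymp"
begin

text \<open>
  After clearing the denominator, P/Q = N/D with D = (exp t - 1) Q, where N and D are exponential
  polynomials, i.e. sums of terms exp (k t) p(t) with polynomials p. These are closed under products
  and differentiation, so both Q > 0 and the monotonicity, whose derivative has numerator
  W = N D' - N' D, reduce to the positivity of explicit exponential polynomials on (0, \<infinity>).
  Positivity is certified by alternating two moves: f > 0 follows from f(0) \<ge> 0 and f' > 0, and
  multiplying by exp (-c t) preserves the sign while making the term with exponent c a pure
  polynomial, whose degree then drops under differentiation. The chain ends when all coefficients
  are nonnegative.
\<close>

fun lpoly :: "'a::comm_semiring_0 list \<Rightarrow> 'a \<Rightarrow> 'a" where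
  "lpoly [] x = 0"
| "lpoly (c # cs) x = c + x * lpoly cs x"

fun ladd :: "'a::comm_semiring_0 list \<Rightarrow> 'a list \<Rightarrow> 'a list" where
  "ladd [] qs = qs"
| "ladd ps [] = ps"
| "ladd (p # ps) (q # qs) = (p + q) # ladd ps qs"

definition lsmult :: "'a::comm_semiring_0 \<Rightarrow> 'a list \<Rightarrow> 'a list" where
  "lsmult c ps = map ((*) c) ps"

fun lmult :: "'a::comm_semiring_0 list \<Rightarrow> 'a list \<Rightarrow> 'a list" where
  "lmult [] qs = []"
| "lmult (p # ps) qs = ladd (lsmult p qs) (0 # lmult ps qs)"

fun lderiv :: "'a::comm_semiring_0 list \<Rightarrow> 'a list" where
  "lderiv [] = []"
| "lderiv (c # cs) = ladd cs (0 # lderiv cs)"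

lemma lpoly_ladd [simp]: "lpoly (ladd ps qs) x = lpoly ps x + lpoly qs x"
  by (induction ps qs rule: ladd.induct) (auto simp: algebra_simps)

lemma lpoly_lsmult [simp]: "lpoly (lsmult c ps) x = c * lpoly ps x"
  by (induction ps) (auto simp: lsmult_def algebra_simps)

lemma lpoly_lmult [simp]: "lpoly (lmult ps qs) x = lpoly ps x * lpoly qs x"
  by (induction ps) (auto simp: algebra_simps)

lemma has_field_derivative_lpoly:
  fixes x :: "'a::real_normed_field"
  shows "(lpoly cs has_field_derivative lpoly (lderiv cs) x) (at x)"
proof (induction cs)
  case (Cons c cs)
  have "((\<lambda>x. c + x * lpoly cs x) has_field_derivative lpoly cs x + x * lpoly (lderiv cs) x) (at x)"
    by (auto intro!: derivative_eq_intros Cons.IH simp: algebra_simps)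
  then show ?case
    by (simp add: algebra_simps)
qed simp

lemma lpoly_nonneg:
  fixes x :: "'a::linordered_comm_semiring_strict"
  assumes "\<forall>c\<in>set cs. 0 \<le> c" "0 \<le> x"
  shows "0 \<le> lpoly cs x"
  using assms by (induction cs) auto

lemma lpoly_at_0_le:
  fixes x :: "'a::linordered_comm_semiring_strict"
  assumes "\<forall>c\<in>set cs. 0 \<le> c" "0 \<le> x"
  shows "lpoly cs 0 \<le> lpoly cs x"
  using assms by (cases cs) (auto intro!: mult_nonneg_nonneg lpoly_nonneg)

text \<open>A pair (k, p) stands for exp (k t) p(t); polynomials are coefficient lists, lowest degree first.\<close>

type_synonym exp_poly = "(real \<times> real list) list"

definition epoly :: "exp_poly \<Rightarrow> real \<Rightarrow> real" where
  "epoly fs t = (\<Sum>(k, p)\<leftarrow>fs. exp (k * t) * lpoly p t)"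

lemma epoly_Nil [simp]: "epoly [] t = 0"
  and epoly_Cons [simp]: "epoly ((k, p) # fs) t = exp (k * t) * lpoly p t + epoly fs t"
  and epoly_append [simp]: "epoly (fs @ gs) t = epoly fs t + epoly gs t"
  by (simp_all add: epoly_def)

definition epoly_deriv :: "exp_poly \<Rightarrow> exp_poly" where
  "epoly_deriv fs = [(k, ladd (lsmult k p) (lderiv p)). (k, p) \<leftarrow> fs]"

lemma has_real_derivative_epoly:
  "(epoly fs has_real_derivative epoly (epoly_deriv fs) t) (at t)"
proof (induction fs)
  case (Cons f fs)
  obtain k p where f: "f = (k, p)"
    by fastforce
  have "((\<lambda>t. exp (k * t) * lpoly p t + epoly fs t) has_real_derivative
      exp (k * t) * k * lpoly p t + exp (k * t) * lpoly (lderiv p) t + epoly (epoly_deriv fs) t) (at t)"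
    by (rule derivative_eq_intros has_field_derivative_lpoly Cons.IH refl | simp add: algebra_simps)+
  then show ?case
    by (simp add: f epoly_deriv_def algebra_simps)
qed (simp add: epoly_deriv_def)

definition epoly_mult :: "exp_poly \<Rightarrow> exp_poly \<Rightarrow> exp_poly" where
  "epoly_mult fs gs = [(k + l, lmult p q). (k, p) \<leftarrow> fs, (l, q) \<leftarrow> gs]"

lemma epoly_mult [simp]: "epoly (epoly_mult fs gs) t = epoly fs t * epoly gs t"
proof (induction fs)
  case (Cons f fs)
  have "epoly [(k + l, lmult p q). (l, q) \<leftarrow> gs] t = exp (k * t) * lpoly p t * epoly gs t" for k p
    by (induction gs) (auto simp: algebra_simps exp_add)
  with Cons show ?case
    by (cases f) (simp add: epoly_mult_def algebra_simps)
qed (simp add: epoly_mult_def)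

definition epoly_uminus :: "exp_poly \<Rightarrow> exp_poly" where
  "epoly_uminus fs = [(k, lsmult (-1) p). (k, p) \<leftarrow> fs]"

lemma epoly_uminus [simp]: "epoly (epoly_uminus fs) t = - epoly fs t"
  by (induction fs) (auto simp: epoly_uminus_def)

definition epoly_damp :: "real \<Rightarrow> exp_poly \<Rightarrow> exp_poly" where
  "epoly_damp c fs = [(k - c, p). (k, p) \<leftarrow> fs]"

lemma epoly_damp [simp]: "epoly (epoly_damp c fs) t = exp (- c * t) * epoly fs t"
  by (induction fs) (auto simp: epoly_damp_def algebra_simps simp flip: exp_add)

fun epoly_insert :: "real \<times> real list \<Rightarrow> exp_poly \<Rightarrow> exp_poly" where
  "epoly_insert f [] = [f]"
| "epoly_insert (k, p) ((l, q) # fs) =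
     (if k = l then (k, ladd p q) # fs else (l, q) # epoly_insert (k, p) fs)"

lemma epoly_insert [simp]:
  "epoly (epoly_insert (k, p) fs) t = exp (k * t) * lpoly p t + epoly fs t"
  by (induction "(k, p)" fs rule: epoly_insert.induct) (auto simp: algebra_simps)

definition epoly_collect :: "exp_poly \<Rightarrow> exp_poly" where
  "epoly_collect fs = foldr epoly_insert fs []"

lemma epoly_collect [simp]: "epoly (epoly_collect fs) t = epoly fs t"
  by (induction fs) (auto simp: epoly_collect_def)

definition nonneg_coeffs :: "exp_poly \<Rightarrow> bool" where
  "nonneg_coeffs fs \<longleftrightarrow> (\<forall>(k, p)\<in>set fs. \<forall>c\<in>set p. 0 \<le> c)"

lemma nonneg_coeffs_Nil [simp]: "nonneg_coeffs []"
  and nonneg_coeffs_Cons [simp]: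
    "nonneg_coeffs ((k, p) # fs) \<longleftrightarrow> (\<forall>c\<in>set p. 0 \<le> c) \<and> nonneg_coeffs fs"
  by (simp_all add: nonneg_coeffs_def)

lemma epoly_nonneg:
  assumes "nonneg_coeffs fs" "0 \<le> t"
  shows "0 \<le> epoly fs t"
  using assms unfolding nonneg_coeffs_def
  by (induction fs) (auto intro!: add_nonneg_nonneg mult_nonneg_nonneg lpoly_nonneg)

lemma epoly_pos:
  assumes "nonneg_coeffs fs" "(k, p) \<in> set fs" "0 < lpoly p 0" "0 \<le> t"
  shows "0 < epoly fs t"
  using assms
proof (induction fs)
  case (Cons f fs)
  obtain l q where f: "f = (l, q)"
    by fastforce
  have q: "\<forall>c\<in>set q. 0 \<le> c"
    using Cons.prems f by (auto simp: nonneg_coeffs_def)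
  show ?case
  proof (cases "(k, p) = (l, q)")
    case True
    then have "0 < lpoly q t"
      using lpoly_at_0_le[OF q] Cons.prems by fastforce
    moreover have "0 \<le> epoly fs t"
      using Cons.prems f by (intro epoly_nonneg) (auto simp: nonneg_coeffs_def)
    ultimately show ?thesis
      using f by (simp add: add_pos_nonneg)
  next
    case False
    then have "0 < epoly fs t"
      using Cons f by (auto simp: nonneg_coeffs_def)
    moreover have "0 \<le> lpoly q t"
      using lpoly_nonneg[OF q] Cons.prems by auto
    ultimately show ?thesis
      using f by (simp add: add_nonneg_pos)
  qed
qed simp

lemma DERIV_pos_imp_pos:
  fixes f :: "real \<Rightarrow> real"
  assumes "\<And>x. (f has_real_derivative f' x) (at x)" "0 \<le> f 0" "\<And>x. 0 < x \<Longrightarrow> 0 < f' x" "0 < t"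
  shows "0 < f t"
proof -
  have "f 0 < f t"
  proof (rule DERIV_pos_imp_increasing_open[OF \<open>0 < t\<close>])
    show "continuous_on {0..t} f"
      using assms(1) by (meson DERIV_isCont continuous_at_imp_continuous_on)
  qed (use assms in auto)
  with assms show ?thesis
    by simp
qed

datatype pos_step = Differentiate | Damp real

fun pos_certificate :: "pos_step list \<Rightarrow> exp_poly \<Rightarrow> bool" where
  "pos_certificate [] fs \<longleftrightarrow>
     nonneg_coeffs fs \<and> (\<exists>(k, p)\<in>set fs. 0 < lpoly p 0)"
| "pos_certificate (Differentiate # s) fs \<longleftrightarrow>
     0 \<le> epoly fs 0 \<and> pos_certificate s (epoly_deriv fs)"
| "pos_certificate (Damp c # s) fs \<longleftrightarrow> pos_certificate s (epoly_damp c fs)"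

lemma pos_certificate_imp_pos:
  "pos_certificate s fs \<Longrightarrow> 0 < t \<Longrightarrow> 0 < epoly fs t"
proof (induction s fs arbitrary: t rule: pos_certificate.induct)
  case (1 fs)
  then show ?case
    using epoly_pos[of fs _ _ t] by auto
next
  case (2 s fs)
  then show ?case
    using DERIV_pos_imp_pos[OF has_real_derivative_epoly] by auto
next
  case (3 c s fs)
  then show ?case
    by (simp add: zero_less_mult_iff)
qed

definition N_epoly :: exp_poly where
  "N_epoly = [(2, [-86, 54, -12, 1]), (1, [160, -16, 12, -1]), (0, [-74, -26])]"
definition Q_epoly :: exp_poly where
  "Q_epoly = [(2, [2]), (1, [-18, 6, -1]), (0, [16, 8])]"
definition D_epoly :: exp_poly where
  "D_epoly = epoly_collect (epoly_mult [(1, [1]), (0, [-1])] Q_epoly)"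
definition W_epoly :: exp_poly where
  "W_epoly = epoly_collect (epoly_mult N_epoly (epoly_deriv D_epoly)
     @ epoly_uminus (epoly_mult (epoly_deriv N_epoly) D_epoly))"

lemma epoly_Q_epoly: "epoly Q_epoly t = Q t"
  by (simp add: Q_def Q_epoly_def power2_eq_square algebra_simps)

lemma P_eq_epoly: "P t = epoly N_epoly t / (exp t - 1)"
  by (simp add: P_def N_epoly_def power2_eq_square power3_eq_cube algebra_simps)

lemma epoly_D_epoly: "epoly D_epoly t = (exp t - 1) * Q t"
  by (simp add: D_epoly_def algebra_simps flip: epoly_Q_epoly)

lemma Q_pos:
  assumes "0 < t"
  shows "0 < Q t"
proof -
  have "pos_certificate (replicate 4 Differentiate @ [Damp 2, Differentiate]) Q_epoly"
    by (simp add: Q_epoly_def epoly_deriv_def epoly_damp_def lsmult_def numeral_eq_Suc)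
  from pos_certificate_imp_pos[OF this assms] show ?thesis
    by (simp add: epoly_Q_epoly)
qed

lemma W_pos:
  assumes "0 < t"
  shows "0 < epoly W_epoly t"
proof -
  have "pos_certificate ([Differentiate, Differentiate, Damp 1] @ replicate 5 Differentiate @ [Damp 1]
      @ replicate 13 Differentiate @ [Damp 2, Differentiate]) W_epoly"
    by (simp add: W_epoly_def D_epoly_def N_epoly_def Q_epoly_def epoly_mult_def
        epoly_uminus_def epoly_collect_def epoly_deriv_def epoly_damp_def lsmult_def numeral_eq_Suc)
  from pos_certificate_imp_pos[OF this assms] show ?thesis .
qed

lemma DERIV_neg_imp_strict_antimono_on:
  fixes f :: "real \<Rightarrow> real"
  assumes "\<And>x. a < x \<Longrightarrow> (f has_real_derivative f' x) (at x)" "\<And>x. a < x \<Longrightarrow> f' x < 0"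
  shows "strict_antimono_on {a<..} f"
proof (rule monotone_onI)
  fix x y
  assume "x \<in> {a<..}" "y \<in> {a<..}" "x < y"
  show "f y < f x"
  proof (rule DERIV_neg_imp_decreasing[OF \<open>x < y\<close>])
    fix z
    assume "x \<le> z"
    with \<open>x \<in> {a<..}\<close> have "a < z"
      by simp
    with assms show "\<exists>d. (f has_real_derivative d) (at z) \<and> d < 0"
      by blast
  qed
qed

lemma has_real_derivative_P_div_Q:
  assumes "0 < t"
  shows "((\<lambda>t. P t / Q t) has_real_derivative - epoly W_epoly t / (epoly D_epoly t)\<^sup>2) (at t)"
proof -
  have "0 < epoly D_epoly t"
    using Q_pos[OF assms] assms by (simp add: epoly_D_epoly)
  then have "((\<lambda>t. epoly N_epoly t / epoly D_epoly t) has_real_derivative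
      (epoly (epoly_deriv N_epoly) t * epoly D_epoly t - epoly N_epoly t * epoly (epoly_deriv D_epoly) t)
      / (epoly D_epoly t * epoly D_epoly t)) (at t)"
    by (intro DERIV_divide has_real_derivative_epoly) simp
  then have "((\<lambda>t. epoly N_epoly t / epoly D_epoly t) has_real_derivative
      - epoly W_epoly t / (epoly D_epoly t)\<^sup>2) (at t)"
    by (simp add: W_epoly_def power2_eq_square)
  then show ?thesis
  proof (rule has_field_derivative_transform_within_open)
    show "epoly N_epoly x / epoly D_epoly x = P x / Q x" if "x \<in> {0<..}" for x
      using Q_pos[of x] that by (simp add: P_eq_epoly epoly_D_epoly)
  qed (use assms in auto)
qed

theorem mainTheorem6:
  shows "(\<forall>t>0. Q t > 0)
    \<and> strict_antimono_on {0<..} (\<lambda>t. P t / Q t)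
    \<and> ((\<lambda>t. P t / Q t) \<longlongrightarrow> 1) (at_right 0)
    \<and> ((\<lambda>t. P t / Q t) \<longlongrightarrow> 0) at_top"
proof (intro conjI)
  show "\<forall>t>0. Q t > 0"
    using Q_pos by blast
  show "strict_antimono_on {0<..} (\<lambda>t. P t / Q t)"
  proof (rule DERIV_neg_imp_strict_antimono_on)
    show "- epoly W_epoly t / (epoly D_epoly t)\<^sup>2 < 0" if "0 < t" for t
      using W_pos[OF that] Q_pos[OF that] that by (simp add: epoly_D_epoly)
  qed (rule has_real_derivative_P_div_Q)
  show "((\<lambda>t. P t / Q t) \<longlongrightarrow> 1) (at_right 0)"
    unfolding P_def Q_def by real_asymp
  show "((\<lambda>t. P t / Q t) \<longlongrightarrow> 0) at_top"
    unfolding P_def Q_def by real_asymp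
qed

end
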